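(* Let $P(z\mid\theta)=h(z)\,g(\theta)\exp(\eta(\theta)\cdot T(z))$ be an exponential family distribution with natural parameter $\eta(\theta)$. Let its conjugate prior be \[ P(\eta(\theta))=\frac{1}{Z_0}\,g(\theta)^{n_0}\exp(\eta(\theta)\cdot\tau_0), \] with hyperparameters $n_0,\tau_0$ and normalizer $Z_0$. Suppose that $\theta^*\sim P(\theta)$ (this conjugate prior), that $\mathcal{D}=P(z\mid\theta^* )$ is the data distribution, and that $\ell(z,\theta)=-\log P(z\mid\theta)$. Then for any training set $Z=\{z_1,\dots,z_n\}\sim\mathcal{D}^n$, the regularizer \[ R^*(\theta)=-\frac1n\log P(\eta(\theta)) \] is a perfect, Bayes-optimal regularizer.
   Context: The training loss is $\hat L(\theta)=\frac1n\sum_{i=1}^n\ell(z_i,\theta)$, and $L(\theta,\mathcal{D})=\mathbb{E}_{z\sim\mathcal{D}}[\ell(z,\theta)]$. The distribution $\mathcal{D}$ is itself random, with law $\mathcal{D}_1$ (here induced by $\theta^*$). The conditional expected test loss is $\bar L(\theta,Z)=\mathbb{E}_{\mathcal{D}\sim\mathcal{D}_1}[L(\theta,\mathcal{D})\mid Z]$. A regularizer $R^*$ is Bayes-optimal if $\arg\min_{\theta\in\Theta}\{\hat L(\theta)+R^*(\theta)\}=\arg\min_{\theta\in\Theta}\{\bar L(\theta,Z)\}$. It is perfect if, in addition, $\hat L(\theta)+R^*(\theta)=h(\bar L(\theta,Z))$ for all $\theta\in\Theta$, for some monotone function $h$. *)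

theory Defs
  imports "HOL-Probability.Probability"
begin

definition nat_param_space :: "'z measure \<Rightarrow> ('z \<Rightarrow> real) \<Rightarrow> ('z \<Rightarrow> 'k::euclidean_space) \<Rightarrow> 'k set" where
  "nat_param_space M h T = {e. integrable M (\<lambda>z. h z * exp (e \<bullet> T z))}"

text \<open>The normalising factor g, as a function of the natural parameter (forced by normalisation).\<close>
definition expfam_g :: "'z measure \<Rightarrow> ('z \<Rightarrow> real) \<Rightarrow> ('z \<Rightarrow> 'k::euclidean_space) \<Rightarrow> 'k \<Rightarrow> real" where
  "expfam_g M h T e = 1 / (\<integral>z. h z * exp (e \<bullet> T z) \<partial>M)"

definition expfam_pdf :: "'z measure \<Rightarrow> ('z \<Rightarrow> real) \<Rightarrow> ('z \<Rightarrow> 'k::euclidean_space) \<Rightarrow> 'k \<Rightarrow> 'z \<Rightarrow> real" where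
  "expfam_pdf M h T e z = h z * expfam_g M h T e * exp (e \<bullet> T z)"

definition expfam_dist :: "'z measure \<Rightarrow> ('z \<Rightarrow> real) \<Rightarrow> ('z \<Rightarrow> 'k::euclidean_space) \<Rightarrow> 'k \<Rightarrow> 'z measure" where
  "expfam_dist M h T e = density M (\<lambda>z. ennreal (expfam_pdf M h T e z))"

definition emp_loss :: "('z \<Rightarrow> 'p \<Rightarrow> real) \<Rightarrow> nat \<Rightarrow> (nat \<Rightarrow> 'z) \<Rightarrow> 'p \<Rightarrow> real" where
  "emp_loss l n Z \<theta> = (\<Sum>i<n. l (Z i) \<theta>) / real n"

definition pop_loss :: "('z \<Rightarrow> 'p \<Rightarrow> real) \<Rightarrow> 'z measure \<Rightarrow> 'p \<Rightarrow> real" where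
  "pop_loss l D \<theta> = (\<integral>z. l z \<theta> \<partial>D)"

text \<open>Conditional expectation (given the training set) of a function F of the random natural
  parameter, computed as the posterior expectation via Bayes' rule: prior density p0 on the set
  Om (w.r.t. Lebesgue measure) and likelihood lik.\<close>
definition posterior_expectation ::
  "'k::euclidean_space set \<Rightarrow> ('k \<Rightarrow> real) \<Rightarrow> ('k \<Rightarrow> real) \<Rightarrow> ('k \<Rightarrow> real) \<Rightarrow> real" where
  "posterior_expectation Om p0 lik F =
     (LINT e:Om|lborel. F e * lik e * p0 e) / (LINT e:Om|lborel. lik e * p0 e)"

definition argmin_on :: "'p set \<Rightarrow> ('p \<Rightarrow> real) \<Rightarrow> 'p set" where
  "argmin_on \<Theta> f = {\<theta>\<in>\<Theta>. \<forall>\<theta>'\<in>\<Theta>. f \<theta> \<le> f \<theta>'}"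

definition bayes_optimal_reg :: "'p set \<Rightarrow> ('p \<Rightarrow> real) \<Rightarrow> ('p \<Rightarrow> real) \<Rightarrow> ('p \<Rightarrow> real) \<Rightarrow> bool" where
  "bayes_optimal_reg \<Theta> Lhat R Lbar \<longleftrightarrow>
     argmin_on \<Theta> (\<lambda>\<theta>. Lhat \<theta> + R \<theta>) = argmin_on \<Theta> Lbar"

definition perfect_reg :: "'p set \<Rightarrow> ('p \<Rightarrow> real) \<Rightarrow> ('p \<Rightarrow> real) \<Rightarrow> ('p \<Rightarrow> real) \<Rightarrow> bool" where
  "perfect_reg \<Theta> Lhat R Lbar \<longleftrightarrow>
     bayes_optimal_reg \<Theta> Lhat R Lbar \<and>
     (\<exists>hf :: real \<Rightarrow> real. mono hf \<and> (\<forall>\<theta>\<in>\<Theta>. Lhat \<theta> + R \<theta> = hf (Lbar \<theta>)))"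

end

theory Submission
  imports Defs
begin

text \<open>Write \<open>A(\<eta>) = ln \<integral> h exp(\<eta> \<bullet> T)\<close> for the log-partition function. By conjugacy the
  posterior density of \<open>\<eta>\<close> given the sample is proportional to \<open>exp(\<eta> \<bullet> S - N A(\<eta>))\<close> with
  \<open>S = \<tau>\<^sub>0 + \<Sum> T(z\<^sub>i)\<close> and \<open>N = n\<^sub>0 + n\<close>, so the regularised training loss equals
  \<open>(N A(\<eta>(\<theta>)) - \<eta>(\<theta>) \<bullet> S) / n\<close> up to an additive constant. The expected test loss under
  \<open>P(z | \<eta>)\<close> is \<open>A(\<eta>(\<theta>)) - \<eta>(\<theta>) \<bullet> \<nabla>A(\<eta>)\<close> up to a term not depending on \<open>\<theta>\<close>, and
  integrating the gradient of the posterior density over the natural parameter space, where it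
  vanishes at the boundary because the partition function blows up there, shows that the
  posterior mean of \<open>\<nabla>A\<close> is \<open>S / N\<close>. Hence the conditional expected test loss is
  \<open>(N A(\<eta>(\<theta>)) - \<eta>(\<theta>) \<bullet> S) / N\<close> up to a constant, an increasing affine function of the
  regularised training loss.\<close>

section \<open>Differentiation under the integral sign\<close>

lemma abs_mult_exp_le:
  fixes u t s e :: real
  assumes "0 < e" "\<bar>t - s\<bar> \<le> e"
  shows "\<bar>u\<bar> * exp (t * u) \<le> (exp ((s + 2*e) * u) + exp ((s - 2*e) * u)) / e"
proof -
  have "(t - s) * u \<le> \<bar>t - s\<bar> * \<bar>u\<bar>" by (metis abs_ge_self abs_mult)
  also have "\<dots> \<le> e * \<bar>u\<bar>" using assms(2) by (intro mult_right_mono) auto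
  finally have "e * \<bar>u\<bar> + t * u \<le> s * u + 2 * e * \<bar>u\<bar>" by (simp add: algebra_simps)
  moreover have "s * u + 2 * e * \<bar>u\<bar> = (s + 2*e) * u \<or> s * u + 2 * e * \<bar>u\<bar> = (s - 2*e) * u"
    by (cases "u \<ge> 0") (auto simp: algebra_simps)
  ultimately have exp_le: "exp (e * \<bar>u\<bar> + t * u) \<le> exp ((s + 2*e) * u) + exp ((s - 2*e) * u)"
    by (smt (verit) exp_gt_zero exp_le_cancel_iff)
  have "e * \<bar>u\<bar> \<le> exp (e * \<bar>u\<bar>)" using exp_ge_add_one_self[of "e * \<bar>u\<bar>"] by linarith
  hence "e * (\<bar>u\<bar> * exp (t * u)) \<le> exp (e * \<bar>u\<bar>) * exp (t * u)"
    by (metis exp_gt_zero mult.assoc mult_right_mono order_less_imp_le)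
  also have "\<dots> \<le> exp ((s + 2*e) * u) + exp ((s - 2*e) * u)"
    using exp_le by (simp add: exp_add)
  finally show ?thesis using assms(1) by (simp add: field_simps mult.commute)
qed

lemma abs_exp_difference_quotient_le:
  fixes u t s e :: real
  assumes "0 < e" "\<bar>t - s\<bar> \<le> e" "t \<noteq> s"
  shows "\<bar>(exp (t * u) - exp (s * u)) / (t - s)\<bar> \<le> (exp ((s + 2*e) * u) + exp ((s - 2*e) * u)) / e"
proof -
  have deriv: "\<And>x. ((\<lambda>t. exp (t * u)) has_real_derivative exp (x * u) * u) (at x)"
    by (auto intro!: derivative_eq_intros)
  obtain \<xi> where \<xi>: "\<bar>\<xi> - s\<bar> \<le> \<bar>t - s\<bar>"
    "(exp (t * u) - exp (s * u)) / (t - s) = exp (\<xi> * u) * u"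
  proof (cases "s < t")
    case True
    from MVT2[OF True, of "\<lambda>t. exp (t * u)" "\<lambda>x. exp (x * u) * u"] deriv
    obtain z where "s < z" "z < t" "exp (t * u) - exp (s * u) = (t - s) * (exp (z * u) * u)" by blast
    thus ?thesis using True by (intro that[of z]) auto
  next
    case False
    hence ts: "t < s" using assms(3) by auto
    from MVT2[OF ts, of "\<lambda>t. exp (t * u)" "\<lambda>x. exp (x * u) * u"] deriv
    obtain z where "t < z" "z < s" "exp (s * u) - exp (t * u) = (s - t) * (exp (z * u) * u)" by blast
    moreover have "(exp (t * u) - exp (s * u)) / (t - s) = (exp (s * u) - exp (t * u)) / (s - t)"
      using ts by (simp add: field_simps)
    ultimately show ?thesis using ts by (intro that[of z]) auto
  qed
  from \<xi>(2) have "\<bar>(exp (t * u) - exp (s * u)) / (t - s)\<bar> = \<bar>u\<bar> * exp (\<xi> * u)" by (simp add: abs_mult)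
  also have "\<dots> \<le> (exp ((s + 2*e) * u) + exp ((s - 2*e) * u)) / e"
    using \<xi>(1) assms(1,2) by (intro abs_mult_exp_le) auto
  finally show ?thesis .
qed

lemma integral_dominated_convergence_at:
  fixes s :: "'c::first_countable_topology \<Rightarrow> 'a \<Rightarrow> 'b::{banach, second_countable_topology}"
    and w :: "'a \<Rightarrow> real"
  assumes "f \<in> borel_measurable M" "\<And>t. s t \<in> borel_measurable M" "integrable M w"
    and lim: "AE x in M. ((\<lambda>t. s t x) \<longlongrightarrow> f x) (at a within S)"
    and bound: "\<forall>\<^sub>F t in at a within S. AE x in M. norm (s t x) \<le> w x"
  shows "((\<lambda>t. integral\<^sup>L M (s t)) \<longlongrightarrow> integral\<^sup>L M f) (at a within S)"
proof (rule tendsto_at_iff_sequentially[THEN iffD2], intro allI impI)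
  fix X :: "nat \<Rightarrow> 'c" assume X: "\<forall>i. X i \<in> S - {a}" "X \<longlonglongrightarrow> a"
  hence X_at: "filterlim X (at a within S) sequentially"
    by (auto simp: filterlim_at eventually_sequentially)
  from filterlim_iff[THEN iffD1, OF X_at, rule_format, OF bound]
  obtain N where w: "\<And>n. N \<le> n \<Longrightarrow> AE x in M. norm (s (X n) x) \<le> w x"
    by (auto simp: eventually_sequentially)
  show "((\<lambda>t. integral\<^sup>L M (s t)) \<circ> X) \<longlonglongrightarrow> integral\<^sup>L M f"
    unfolding comp_def
  proof (rule LIMSEQ_offset, rule integral_dominated_convergence)
    show "AE x in M. norm (s (X (n + N)) x) \<le> w x" for n
      by (rule w) auto
    show "AE x in M. (\<lambda>n. s (X (n + N)) x) \<longlonglongrightarrow> f x"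
      using lim
    proof eventually_elim
      fix x assume "((\<lambda>t. s t x) \<longlongrightarrow> f x) (at a within S)"
      then show "(\<lambda>n. s (X (n + N)) x) \<longlonglongrightarrow> f x"
        by (intro LIMSEQ_ignore_initial_segment filterlim_compose[OF _ X_at])
    qed
  qed fact+
qed

lemma integrable_mult_exp_derivative:
  fixes w u :: "'a \<Rightarrow> real"
  assumes [measurable]: "w \<in> borel_measurable M" "u \<in> borel_measurable M"
    and w_nonneg: "\<And>z. z \<in> space M \<Longrightarrow> 0 \<le> w z" and "0 < e"
    and integrable: "\<And>t. \<bar>t - s\<bar> \<le> 2 * e \<Longrightarrow> integrable M (\<lambda>z. w z * exp (t * u z))"
  shows "integrable M (\<lambda>z. w z * u z * exp (s * u z))"
proof (rule Bochner_Integration.integrable_bound)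
  show "integrable M (\<lambda>z. w z * ((exp ((s + 2*e) * u z) + exp ((s - 2*e) * u z)) / e))"
    using integrable[of "s + 2*e"] integrable[of "s - 2*e"] \<open>0 < e\<close>
    by (simp add: distrib_left add_divide_distrib)
  show "AE z in M. norm (w z * u z * exp (s * u z))
      \<le> norm (w z * ((exp ((s + 2*e) * u z) + exp ((s - 2*e) * u z)) / e))"
  proof (rule AE_I2)
    fix z assume "z \<in> space M"
    have "norm (w z * u z * exp (s * u z)) = w z * (\<bar>u z\<bar> * exp (s * u z))"
      using w_nonneg[OF \<open>z \<in> space M\<close>] by (simp add: abs_mult)
    also have "\<dots> \<le> w z * ((exp ((s + 2*e) * u z) + exp ((s - 2*e) * u z)) / e)"
      using abs_mult_exp_le[OF \<open>0 < e\<close>, of s s] w_nonneg[OF \<open>z \<in> space M\<close>] \<open>0 < e\<close>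
      by (intro mult_left_mono) auto
    finally show "norm (w z * u z * exp (s * u z))
        \<le> norm (w z * ((exp ((s + 2*e) * u z) + exp ((s - 2*e) * u z)) / e))"
      unfolding real_norm_def by (rule order_trans[OF _ abs_ge_self])
  qed
qed measurable

lemma integral_mult_exp_has_real_derivative:
  fixes w u :: "'a \<Rightarrow> real"
  assumes [measurable]: "w \<in> borel_measurable M" "u \<in> borel_measurable M"
    and w_nonneg: "\<And>z. z \<in> space M \<Longrightarrow> 0 \<le> w z" and "0 < e"
    and integrable: "\<And>t. \<bar>t - s\<bar> \<le> 2 * e \<Longrightarrow> integrable M (\<lambda>z. w z * exp (t * u z))"
  shows "((\<lambda>t. \<integral>z. w z * exp (t * u z) \<partial>M) has_real_derivative (\<integral>z. w z * u z * exp (s * u z) \<partial>M)) (at s)"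
proof -
  define F where "F t = (\<integral>z. w z * exp (t * u z) \<partial>M)" for t
  define D where "D t z = w z * ((exp (t * u z) - exp (s * u z)) / (t - s))" for t z
  define B where "B z = w z * ((exp ((s + 2*e) * u z) + exp ((s - 2*e) * u z)) / e)" for z
  have near: "\<forall>\<^sub>F t in at s. \<bar>t - s\<bar> < e \<and> t \<noteq> s"
    unfolding eventually_at dist_real_def using \<open>0 < e\<close> by auto
  have "((\<lambda>t. \<integral>z. D t z \<partial>M) \<longlongrightarrow> (\<integral>z. w z * u z * exp (s * u z) \<partial>M)) (at s)"
  proof (rule integral_dominated_convergence_at[where w=B])
    show "integrable M B"
      unfolding B_def[abs_def] using integrable[of "s + 2*e"] integrable[of "s - 2*e"] \<open>0 < e\<close>
      by (simp add: distrib_left add_divide_distrib)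
    show "AE z in M. ((\<lambda>t. D t z) \<longlongrightarrow> w z * u z * exp (s * u z)) (at s)"
    proof (rule AE_I2)
      fix z
      have "((\<lambda>t. exp (t * u z)) has_real_derivative exp (s * u z) * u z) (at s)"
        by (auto intro!: derivative_eq_intros)
      hence "((\<lambda>t. w z * ((exp (t * u z) - exp (s * u z)) / (t - s)))
          \<longlongrightarrow> w z * (exp (s * u z) * u z)) (at s)"
        unfolding has_field_derivative_iff by (rule tendsto_mult_left)
      thus "((\<lambda>t. D t z) \<longlongrightarrow> w z * u z * exp (s * u z)) (at s)"
        by (simp add: D_def mult_ac)
    qed
    from near show "\<forall>\<^sub>F t in at s. AE z in M. norm (D t z) \<le> B z"
    proof eventually_elim
      case (elim t)
      show ?case
      proof (rule AE_I2)
        fix z assume "z \<in> space M"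
        hence "w z * \<bar>(exp (t * u z) - exp (s * u z)) / (t - s)\<bar>
            \<le> w z * ((exp ((s + 2*e) * u z) + exp ((s - 2*e) * u z)) / e)"
          using abs_exp_difference_quotient_le[OF \<open>0 < e\<close>, of t s "u z"] elim w_nonneg
          by (intro mult_left_mono) auto
        thus "norm (D t z) \<le> B z"
          using w_nonneg[OF \<open>z \<in> space M\<close>] by (simp add: D_def B_def abs_mult)
      qed
    qed
  qed (simp_all add: D_def)
  moreover have "\<forall>\<^sub>F t in at s. (\<integral>z. D t z \<partial>M) = (F t - F s) / (t - s)"
    using near
  proof eventually_elim
    case (elim t)
    hence "integrable M (\<lambda>z. w z * exp (t * u z))" using \<open>0 < e\<close> by (intro integrable) auto
    moreover have "integrable M (\<lambda>z. w z * exp (s * u z))" using \<open>0 < e\<close> by (intro integrable) simp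
    ultimately show ?case by (simp add: D_def F_def right_diff_distrib)
  qed
  ultimately show "(F has_real_derivative (\<integral>z. w z * u z * exp (s * u z) \<partial>M)) (at s)"
    unfolding has_field_derivative_iff by (rule Lim_transform_eventually)
qed

section \<open>Integrals over Euclidean space\<close>

lemma
  fixes f :: "'a::euclidean_space \<Rightarrow> 'b::{banach, second_countable_topology}"
  assumes [measurable]: "f \<in> borel_measurable borel"
  shows lborel_integral_translate: "(\<integral>x. f (x + c) \<partial>lborel) = (\<integral>x. f x \<partial>lborel)"
    and lborel_integrable_translate: "integrable lborel (\<lambda>x. f (x + c)) \<longleftrightarrow> integrable lborel f"
proof -
  have [measurable]: "(+) c \<in> measurable lborel borel" by simp
  have "(\<integral>x. f x \<partial>lborel) = (\<integral>x. f x \<partial>distr lborel borel ((+) c))"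
    by (simp only: lborel_distr_plus)
  also have "\<dots> = (\<integral>x. f (c + x) \<partial>lborel)"
    by (rule integral_distr) measurable
  finally show "(\<integral>x. f (x + c) \<partial>lborel) = (\<integral>x. f x \<partial>lborel)" by (simp add: add.commute)
  have "integrable lborel f \<longleftrightarrow> integrable (distr lborel borel ((+) c)) f"
    by (simp only: lborel_distr_plus)
  also have "\<dots> \<longleftrightarrow> integrable lborel (\<lambda>x. f (c + x))"
    by (rule integrable_distr_eq) measurable
  finally show "integrable lborel (\<lambda>x. f (x + c)) \<longleftrightarrow> integrable lborel f" by (simp add: add.commute)
qed

text \<open>Integrating the increments over all base points: by Fubini and translation invariance
  the left side integrates to \<open>0\<close>, the right side to \<open>\<integral>G\<close>.\<close>
lemma lborel_integral_eq_0_if_increments: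
  fixes G q :: "'a::euclidean_space \<Rightarrow> real" and d :: 'a
  assumes G_integrable: "integrable lborel G" and q_integrable: "integrable lborel q"
    and increment: "\<And>x. integrable lborel (\<lambda>s. indicator {0..1} s * G (x + s *\<^sub>R d)) \<Longrightarrow>
                      q (x + d) - q x = (\<integral>s. indicator {0..1} s * G (x + s *\<^sub>R d) \<partial>lborel)"
  shows "(\<integral>x. G x \<partial>lborel) = 0"
proof -
  have [measurable]: "G \<in> borel_measurable borel" "q \<in> borel_measurable borel"
    using G_integrable q_integrable by (simp_all add: borel_measurable_integrable)
  define f where "f s x = indicator {0..1::real} s * G (x + s *\<^sub>R d)" for s x
  have f_integrable: "integrable (lborel \<Otimes>\<^sub>M lborel) (\<lambda>(s, x). f s x)"
  proof (rule lborel_pair.Fubini_integrable)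
    have "(\<integral>x. \<bar>G (x + s *\<^sub>R d)\<bar> \<partial>lborel) = (\<integral>x. \<bar>G x\<bar> \<partial>lborel)" for s
      by (rule lborel_integral_translate) measurable
    hence "(\<lambda>s. \<integral>x. norm (f s x) \<partial>lborel) = (\<lambda>s. indicator {0..1::real} s * (\<integral>x. \<bar>G x\<bar> \<partial>lborel))"
      by (auto simp: f_def abs_mult indicator_def)
    thus "integrable lborel (\<lambda>s. \<integral>x. norm (case (s, x) of (s, x) \<Rightarrow> f s x) \<partial>lborel)"
      by simp
    show "AE s in lborel. integrable lborel (\<lambda>x. case (s, x) of (s, x) \<Rightarrow> f s x)"
      using G_integrable by (intro AE_I2) (simp add: f_def lborel_integrable_translate)
  qed (simp add: f_def)
  have "(\<integral>x. q (x + d) - q x \<partial>lborel) = (\<integral>x. q (x + d) \<partial>lborel) - (\<integral>x. q x \<partial>lborel)"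
    using q_integrable by (simp add: lborel_integrable_translate)
  hence "0 = (\<integral>x. q (x + d) - q x \<partial>lborel)"
    by (simp add: lborel_integral_translate)
  also have "\<dots> = (\<integral>x. (\<integral>s. f s x \<partial>lborel) \<partial>lborel)"
    using lborel_pair.AE_integrable_snd[OF f_integrable]
    by (intro integral_cong_AE) (auto simp: f_def increment elim: AE_mp)
  also have "\<dots> = (\<integral>s. (\<integral>x. f s x \<partial>lborel) \<partial>lborel)"
    by (rule lborel_pair.Fubini_integral[OF f_integrable])
  also have "\<dots> = (\<integral>s. indicator {0..1::real} s * (\<integral>x. G x \<partial>lborel) \<partial>lborel)"
    by (simp add: f_def lborel_integral_translate)
  also have "\<dots> = (\<integral>x. G x \<partial>lborel)" by simp
  finally show ?thesis ..
qed

lemma closure_diff_convex_real_subset: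
  fixes J :: "real set"
  assumes "convex J"
  shows "closure J - J \<subseteq> {Inf J, Sup J}"
proof
  fix s assume s: "s \<in> closure J - J"
  have "(\<forall>a\<in>J. s \<le> a) \<or> (\<forall>b\<in>J. b \<le> s)"
  proof (rule ccontr)
    assume "\<not> ?thesis"
    then obtain a b where "a \<in> J" "b \<in> J" "a < s" "s < b" by (auto simp: not_le)
    hence "s \<in> J" using \<open>convex J\<close> unfolding is_interval_convex_1[symmetric] is_interval_1
      by (meson less_imp_le)
    thus False using s by simp
  qed
  moreover have "J \<noteq> {}" using s by auto
  ultimately have "s = Inf J \<or> s = Sup J"
  proof (elim disjE)
    assume lower: "\<forall>a\<in>J. s \<le> a"
    hence "bdd_below J" by (auto simp: bdd_below_def)
    hence "closure J \<subseteq> {Inf J..}" by (intro closure_minimal) (auto intro: cInf_lower)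
    hence "Inf J \<le> s" using s by auto
    moreover have "s \<le> Inf J" using lower \<open>J \<noteq> {}\<close> by (intro cInf_greatest) auto
    ultimately show ?thesis by simp
  next
    assume upper: "\<forall>b\<in>J. b \<le> s"
    hence "bdd_above J" by (auto simp: bdd_above_def)
    hence "closure J \<subseteq> {..Sup J}" by (intro closure_minimal) (auto intro: cSup_upper)
    hence "s \<le> Sup J" using s by auto
    moreover have "Sup J \<le> s" using upper \<open>J \<noteq> {}\<close> by (intro cSup_least) auto
    ultimately show ?thesis by simp
  qed
  thus "s \<in> {Inf J, Sup J}" by simp
qed

text \<open>Off the closure of \<open>J\<close> the function vanishes locally, and \<open>closure J - J\<close> has at most two
  points, which the strong fundamental theorem of calculus may ignore.\<close>
lemma fundamental_theorem_of_calculus_convex_support: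
  fixes \<psi> \<psi>' :: "real \<Rightarrow> real" and J :: "real set"
  assumes "convex J" "a \<le> b"
    and outside: "\<And>s. s \<notin> J \<Longrightarrow> \<psi> s = 0 \<and> \<psi>' s = 0"
    and continuous: "\<And>s. isCont \<psi> s"
    and inside: "\<And>s. s \<in> J \<Longrightarrow> (\<psi> has_real_derivative \<psi>' s) (at s)"
  shows "(\<psi>' has_integral \<psi> b - \<psi> a) {a..b}"
proof (rule fundamental_theorem_of_calculus_interior_strong[where S="{Inf J, Sup J}"])
  show "continuous_on {a..b} \<psi>" using continuous by (intro continuous_at_imp_continuous_on) auto
  fix s assume s: "s \<in> {a<..<b} - {Inf J, Sup J}"
  have "(\<psi> has_real_derivative \<psi>' s) (at s)"
  proof (cases "s \<in> J")
    case False
    hence s_outside: "s \<in> - closure J"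
      using closure_diff_convex_real_subset[OF \<open>convex J\<close>] s by auto
    have vanish: "\<psi> y = 0" if "y \<in> - closure J" for y
      using outside that closure_subset by blast
    have "(\<psi> has_real_derivative 0) (at s)"
      by (rule has_field_derivative_transform_within_open[of "\<lambda>_. 0" 0 s "- closure J"])
         (use s_outside vanish in auto)
    thus ?thesis using outside[OF False] by simp
  qed (rule inside)
  thus "(\<psi> has_vector_derivative \<psi>' s) (at s)"
    by (simp add: has_real_derivative_iff_has_vector_derivative)
qed (use \<open>a \<le> b\<close> in auto)

lemma segment_integral_eq_diff:
  fixes q G :: "'a::euclidean_space \<Rightarrow> real" and U :: "'a set" and x d :: 'a
  assumes "convex U"
    and outside: "\<And>y. y \<notin> U \<Longrightarrow> q y = 0 \<and> G y = 0 \<and> (q \<longlongrightarrow> 0) (at y)"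
    and inside: "\<And>y. y \<in> U \<Longrightarrow> ((\<lambda>t. q (y + t *\<^sub>R d)) has_real_derivative G y) (at 0)"
    and integrable: "integrable lborel (\<lambda>s. indicator {0..1} s * G (x + s *\<^sub>R d))"
  shows "q (x + d) - q x = (\<integral>s. indicator {0..1} s * G (x + s *\<^sub>R d) \<partial>lborel)"
proof -
  define \<psi> where "\<psi> s = q (x + s *\<^sub>R d)" for s
  define J where "J = (\<lambda>s. x + s *\<^sub>R d) -` U"
  have "convex J"
  proof -
    have "J = (\<lambda>s. s *\<^sub>R d) -` ((+) (- x) ` U)"
      by (auto simp: J_def image_iff algebra_simps)
    thus ?thesis
      by (metis \<open>convex U\<close> convex_linear_vimage convex_translation linear_scaleR_left)
  qed
  have deriv: "(\<psi> has_real_derivative G (x + s *\<^sub>R d)) (at s)" if "s \<in> J" for s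
  proof -
    have "((\<lambda>t. q ((x + s *\<^sub>R d) + t *\<^sub>R d)) has_real_derivative G (x + s *\<^sub>R d)) (at 0)"
      using inside that by (simp add: J_def)
    hence "((\<lambda>t. \<psi> (t + s)) has_real_derivative G (x + s *\<^sub>R d)) (at 0)"
      by (simp add: \<psi>_def algebra_simps scaleR_add_left)
    thus ?thesis using DERIV_shift[of \<psi> _ 0 s] by simp
  qed
  have vanish: "\<psi> s = 0 \<and> G (x + s *\<^sub>R d) = 0" if "s \<notin> J" for s
    using outside that by (simp add: J_def \<psi>_def)
  have continuous: "isCont \<psi> s" for s
  proof (cases "s \<in> J")
    case True
    thus ?thesis using deriv DERIV_isCont by blast
  next
    case False
    hence "isCont q (x + s *\<^sub>R d)" using outside by (simp add: J_def isCont_def)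
    thus ?thesis unfolding \<psi>_def by (rule isCont_o2[rotated]) (intro continuous_intros)
  qed
  have "((\<lambda>s. G (x + s *\<^sub>R d)) has_integral \<psi> 1 - \<psi> 0) {0..1}"
    by (rule fundamental_theorem_of_calculus_convex_support[OF \<open>convex J\<close> _ vanish continuous deriv])
       simp_all
  hence "integral {0..1} (\<lambda>s. G (x + s *\<^sub>R d)) = \<psi> 1 - \<psi> 0" by (rule integral_unique)
  moreover have "set_integrable lborel {0..1} (\<lambda>s. G (x + s *\<^sub>R d))"
    using integrable by (simp add: set_integrable_def)
  hence "(LINT s:{0..1}|lborel. G (x + s *\<^sub>R d)) = integral {0..1} (\<lambda>s. G (x + s *\<^sub>R d))"
    by (rule set_borel_integral_eq_integral(2))
  ultimately show ?thesis by (simp add: set_lebesgue_integral_def \<psi>_def)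
qed

lemma lborel_integral_directional_derivative_eq_0:
  fixes q G :: "'a::euclidean_space \<Rightarrow> real" and U :: "'a set" and d :: 'a
  assumes "convex U" "integrable lborel q" "integrable lborel G"
    and outside: "\<And>y. y \<notin> U \<Longrightarrow> q y = 0 \<and> G y = 0 \<and> (q \<longlongrightarrow> 0) (at y)"
    and inside: "\<And>y. y \<in> U \<Longrightarrow> ((\<lambda>t. q (y + t *\<^sub>R d)) has_real_derivative G y) (at 0)"
  shows "(\<integral>y. G y \<partial>lborel) = 0"
  using assms
  by (intro lborel_integral_eq_0_if_increments[where q=q and d=d] segment_integral_eq_diff[where U=U])
     auto

lemma set_integral_pos_if_open:
  fixes f :: "'a::euclidean_space \<Rightarrow> real"
  assumes "open S" "S \<noteq> {}" "set_integrable lborel S f" and pos: "\<And>x. x \<in> S \<Longrightarrow> 0 < f x"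
  shows "0 < (LINT x:S|lborel. f x)"
proof -
  have nonneg: "AE x in lborel. 0 \<le> indicator S x * f x"
    using pos by (intro AE_I2) (simp add: indicator_def less_imp_le)
  have "(LINT x:S|lborel. f x) \<noteq> 0"
  proof
    assume "(LINT x:S|lborel. f x) = 0"
    hence "AE x in lborel. indicator S x * f x = 0"
      using assms(3) nonneg by (simp add: set_lebesgue_integral_def set_integrable_def integral_nonneg_eq_0_iff_AE)
    hence "AE x in lborel. x \<notin> S"
      by eventually_elim (use pos in \<open>force simp: indicator_def split: if_splits\<close>)
    hence "S \<in> null_sets lborel"
      using \<open>open S\<close> by (subst AE_iff_null_sets) auto
    hence "negligible S"
      by (simp add: negligible_iff_null_sets null_sets_completionI)
    thus False using open_not_negligible[OF \<open>open S\<close> \<open>S \<noteq> {}\<close>] by simp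
  qed
  moreover have "0 \<le> (LINT x:S|lborel. f x)"
    using nonneg by (simp add: set_lebesgue_integral_def integral_nonneg_AE)
  ultimately show ?thesis by simp
qed

section \<open>Exponential families and their conjugate priors\<close>

locale exp_family =
  fixes M :: "'z measure" and h :: "'z \<Rightarrow> real" and T :: "'z \<Rightarrow> 'k::euclidean_space"
  assumes h_measurable [measurable]: "h \<in> borel_measurable M"
    and T_measurable [measurable]: "T \<in> borel_measurable M"
    and h_nonneg: "\<And>z. z \<in> space M \<Longrightarrow> 0 \<le> h z"
begin

abbreviation \<Omega> :: "'k set" where "\<Omega> \<equiv> nat_param_space M h T"

definition partition :: "'k \<Rightarrow> real" where
  "partition e = (\<integral>z. h z * exp (e \<bullet> T z) \<partial>M)"

definition partition_deriv :: "'k \<Rightarrow> 'k \<Rightarrow> real" where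
  "partition_deriv d e = (\<integral>z. h z * (d \<bullet> T z) * exp (e \<bullet> T z) \<partial>M)"

text \<open>The conjugate prior is \<open>conj_kernel n\<^sub>0 \<tau>\<^sub>0 / Z\<^sub>0\<close>, and the posterior after observing
  \<open>z\<^sub>1, \<dots>, z\<^sub>n\<close> is proportional to \<open>conj_kernel (n + n\<^sub>0) (\<tau>\<^sub>0 + \<Sum> T(z\<^sub>i))\<close>.\<close>
definition conj_kernel :: "real \<Rightarrow> 'k \<Rightarrow> 'k \<Rightarrow> real" where
  "conj_kernel N S e = exp (e \<bullet> S - N * ln (partition e))"

definition cross_entropy :: "'k \<Rightarrow> 'k \<Rightarrow> real" where
  "cross_entropy e e' = (\<integral>z. - ln (expfam_pdf M h T e' z) \<partial>expfam_dist M h T e)"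

lemma partition_nonneg: "0 \<le> partition e"
  unfolding partition_def by (rule integral_nonneg_AE) (simp add: h_nonneg)

lemma convex_nat_param_space: "convex \<Omega>"
  unfolding convex_def nat_param_space_def
proof (intro ballI allI impI, clarsimp)
  fix x y :: 'k and u v :: real
  assume "integrable M (\<lambda>z. h z * exp (x \<bullet> T z))" "integrable M (\<lambda>z. h z * exp (y \<bullet> T z))"
    and uv: "0 \<le> u" "0 \<le> v" "u + v = 1"
  hence "integrable M (\<lambda>z. u * (h z * exp (x \<bullet> T z)) + v * (h z * exp (y \<bullet> T z)))"
    by auto
  thus "integrable M (\<lambda>z. h z * exp ((u *\<^sub>R x + v *\<^sub>R y) \<bullet> T z))"
  proof (rule Bochner_Integration.integrable_bound)
    show "AE z in M. norm (h z * exp ((u *\<^sub>R x + v *\<^sub>R y) \<bullet> T z))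
        \<le> norm (u * (h z * exp (x \<bullet> T z)) + v * (h z * exp (y \<bullet> T z)))"
    proof (rule AE_I2)
      fix z assume z: "z \<in> space M"
      have u: "u = 1 - v" using uv by simp
      have "exp (u * (x \<bullet> T z) + v * (y \<bullet> T z)) \<le> u * exp (x \<bullet> T z) + v * exp (y \<bullet> T z)"
        unfolding u using convex_onD[OF exp_convex, of v "x \<bullet> T z" "y \<bullet> T z"] uv
        by (simp add: algebra_simps)
      hence "h z * exp ((u *\<^sub>R x + v *\<^sub>R y) \<bullet> T z) \<le> h z * (u * exp (x \<bullet> T z) + v * exp (y \<bullet> T z))"
        using h_nonneg[OF z] by (intro mult_left_mono) (auto simp: inner_add_left)
      thus "norm (h z * exp ((u *\<^sub>R x + v *\<^sub>R y) \<bullet> T z))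
        \<le> norm (u * (h z * exp (x \<bullet> T z)) + v * (h z * exp (y \<bullet> T z)))"
        using h_nonneg[OF z] uv by (simp add: algebra_simps)
    qed
  qed measurable
qed

text \<open>Fatou's lemma: the partition function is infinite at \<open>b \<notin> \<Omega>\<close>, and its lower
  semicontinuity forces it to blow up along every sequence approaching \<open>b\<close>.\<close>
lemma partition_eventually_gt:
  assumes "b \<notin> \<Omega>" "X \<longlonglongrightarrow> b"
  shows "\<forall>\<^sub>F i in sequentially. X i \<in> \<Omega> \<longrightarrow> C < partition (X i)"
proof -
  define P where "P e = (\<integral>\<^sup>+z. ennreal (h z * exp (e \<bullet> T z)) \<partial>M)" for e
  have "P b = \<infinity>"
  proof (rule ccontr)
    assume "P b \<noteq> \<infinity>"
    hence "integrable M (\<lambda>z. h z * exp (b \<bullet> T z))"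
      by (intro integrableI_bounded)
         (auto simp: P_def h_nonneg top.not_eq_extremum cong: nn_integral_cong)
    thus False using \<open>b \<notin> \<Omega>\<close> by (simp add: nat_param_space_def)
  qed
  moreover have "P b \<le> liminf (\<lambda>i. P (X i))"
  proof -
    have "liminf (\<lambda>i. ennreal (h z * exp (X i \<bullet> T z))) = ennreal (h z * exp (b \<bullet> T z))" for z
      by (rule lim_imp_Liminf) (auto intro!: tendsto_intros assms(2))
    hence "P b = (\<integral>\<^sup>+z. liminf (\<lambda>i. ennreal (h z * exp (X i \<bullet> T z))) \<partial>M)"
      by (simp add: P_def)
    also have "\<dots> \<le> liminf (\<lambda>i. P (X i))"
      unfolding P_def by (rule nn_integral_liminf) measurable
    finally show ?thesis .
  qed
  ultimately have "\<forall>\<^sub>F i in sequentially. ennreal (max C 0) < P (X i)"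
    by (simp add: le_Liminf_iff)
  thus ?thesis
  proof eventually_elim
    case (elim i)
    show ?case
    proof
      assume "X i \<in> \<Omega>"
      hence "P (X i) = ennreal (partition (X i))"
        unfolding P_def partition_def nat_param_space_def
        by (intro nn_integral_eq_integral) (auto intro!: AE_I2 simp: h_nonneg)
      thus "C < partition (X i)"
        using elim partition_nonneg[of "X i"] by (cases "0 \<le> C") (auto simp: ennreal_less_iff)
    qed
  qed
qed

lemma conj_kernel_tendsto_0:
  assumes "b \<notin> \<Omega>" "0 < N"
  shows "((\<lambda>e. indicator \<Omega> e * conj_kernel N S e) \<longlongrightarrow> 0) (at b)"
proof (rule tendsto_at_iff_sequentially[THEN iffD2], intro allI impI)
  fix X assume "\<forall>i. X i \<in> UNIV - {b}" and lim: "X \<longlonglongrightarrow> b"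
  have nonneg: "0 \<le> indicator \<Omega> e * conj_kernel N S e" for e
    by (simp add: conj_kernel_def)
  show "((\<lambda>e. indicator \<Omega> e * conj_kernel N S e) \<circ> X) \<longlonglongrightarrow> 0"
  proof (rule order_tendstoI)
    fix \<epsilon> :: real assume "0 < \<epsilon>"
    define L where "L = (b \<bullet> S + 1 - ln \<epsilon>) / N"
    have "(\<lambda>i. X i \<bullet> S) \<longlonglongrightarrow> b \<bullet> S" by (intro tendsto_intros lim)
    hence "\<forall>\<^sub>F i in sequentially. X i \<bullet> S < b \<bullet> S + 1"
      by (rule order_tendstoD) simp
    moreover have "\<forall>\<^sub>F i in sequentially. X i \<in> \<Omega> \<longrightarrow> exp L < partition (X i)"
      by (rule partition_eventually_gt[OF assms(1) lim])
    ultimately show "\<forall>\<^sub>F i in sequentially. ((\<lambda>e. indicator \<Omega> e * conj_kernel N S e) \<circ> X) i < \<epsilon>"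
    proof eventually_elim
      case (elim i)
      show ?case
      proof (cases "X i \<in> \<Omega>")
        case True
        with elim have "exp L < partition (X i)" by simp
        hence "ln (exp L) < ln (partition (X i))"
          by (subst ln_less_cancel_iff) (auto intro: less_trans[OF exp_gt_zero])
        hence "N * L < N * ln (partition (X i))"
          using \<open>0 < N\<close> by simp
        moreover have "N * L = b \<bullet> S + 1 - ln \<epsilon>" using \<open>0 < N\<close> by (simp add: L_def)
        ultimately have "X i \<bullet> S - N * ln (partition (X i)) < ln \<epsilon>"
          using elim(1) by linarith
        hence "conj_kernel N S (X i) < exp (ln \<epsilon>)"
          unfolding conj_kernel_def by simp
        thus ?thesis using True \<open>0 < \<epsilon>\<close> by simp
      qed (simp add: \<open>0 < \<epsilon>\<close>)
    qed
  qed (use nonneg in \<open>auto intro: always_eventually less_le_trans\<close>)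
qed

lemma expfam_pdf_eq: "expfam_pdf M h T e z = h z * exp (e \<bullet> T z) / partition e"
  by (simp add: expfam_pdf_def expfam_g_def partition_def)

lemma neg_ln_expfam_pdf:
  assumes "0 < h z" "0 < partition e"
  shows "- ln (expfam_pdf M h T e z) = ln (partition e) - e \<bullet> T z - ln (h z)"
  using assms by (simp add: expfam_pdf_eq ln_mult ln_div)

end

locale regular_exp_family = exp_family +
  assumes open_nat_param_space: "open \<Omega>"
    and partition_pos: "\<And>e. e \<in> \<Omega> \<Longrightarrow> 0 < partition e"
begin

lemma
  assumes "e \<in> \<Omega>"
  shows integrable_partition_deriv: "integrable M (\<lambda>z. h z * (d \<bullet> T z) * exp (e \<bullet> T z))"
    and partition_has_directional_derivative:
      "((\<lambda>t. partition (e + t *\<^sub>R d)) has_real_derivative partition_deriv d e) (at 0)"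
proof -
  have "open ((\<lambda>t::real. e + t *\<^sub>R d) -` \<Omega>)"
    by (rule continuous_open_vimage[OF open_nat_param_space]) (intro continuous_intros)
  moreover have "0 \<in> (\<lambda>t::real. e + t *\<^sub>R d) -` \<Omega>" using assms by simp
  ultimately obtain r where "0 < r" "cball 0 r \<subseteq> (\<lambda>t::real. e + t *\<^sub>R d) -` \<Omega>"
    by (meson open_contains_cball)
  hence line: "integrable M (\<lambda>z. h z * exp (e \<bullet> T z) * exp (t * (d \<bullet> T z)))"
    if "\<bar>t\<bar> \<le> r" for t
    using that by (auto simp: subset_iff nat_param_space_def inner_add_left exp_add mult.assoc)
  have nonneg: "0 \<le> h z * exp (e \<bullet> T z)" if "z \<in> space M" for z
    using h_nonneg[OF that] by simp
  have "integrable M (\<lambda>z. h z * exp (e \<bullet> T z) * (d \<bullet> T z) * exp (0 * (d \<bullet> T z)))"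
    by (rule integrable_mult_exp_derivative[where e="r / 2", OF _ _ nonneg])
       (use \<open>0 < r\<close> line in simp_all)
  moreover have "((\<lambda>t. \<integral>z. h z * exp (e \<bullet> T z) * exp (t * (d \<bullet> T z)) \<partial>M) has_real_derivative
      (\<integral>z. h z * exp (e \<bullet> T z) * (d \<bullet> T z) * exp (0 * (d \<bullet> T z)) \<partial>M)) (at 0)"
    by (rule integral_mult_exp_has_real_derivative[where e="r / 2", OF _ _ nonneg])
       (use \<open>0 < r\<close> line in simp_all)
  ultimately show "integrable M (\<lambda>z. h z * (d \<bullet> T z) * exp (e \<bullet> T z))"
    and "((\<lambda>t. partition (e + t *\<^sub>R d)) has_real_derivative partition_deriv d e) (at 0)"
    by (simp_all add: partition_def partition_deriv_def inner_add_left exp_add mult_ac)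
qed

lemma conj_kernel_has_directional_derivative:
  assumes "e \<in> \<Omega>"
  shows "((\<lambda>t. conj_kernel N S (e + t *\<^sub>R d)) has_real_derivative
           (d \<bullet> S - N * (partition_deriv d e / partition e)) * conj_kernel N S e) (at 0)"
  unfolding conj_kernel_def
  using partition_has_directional_derivative[OF assms] partition_pos[OF assms]
  by (auto intro!: derivative_eq_intros simp: inner_add_left mult.commute)

text \<open>The quotient \<open>partition_deriv d e / partition e\<close> is the mean of \<open>d \<bullet> T\<close> under \<open>P(\<cdot> | e)\<close>.
  The derivative of \<open>conj_kernel N S\<close> in direction \<open>d\<close> integrates to zero over \<open>\<Omega>\<close>, since
  the kernel vanishes at the boundary; hence the posterior mean of this mean is \<open>d \<bullet> S / N\<close>.\<close>
lemma set_integral_partition_deriv_conj_kernel: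
  assumes "0 < N"
    and kernel_integrable: "set_integrable lborel \<Omega> (conj_kernel N S)"
    and mean_integrable: "set_integrable lborel \<Omega> (\<lambda>e. partition_deriv d e / partition e * conj_kernel N S e)"
  shows "(LINT e:\<Omega>|lborel. partition_deriv d e / partition e * conj_kernel N S e)
       = (d \<bullet> S / N) * (LINT e:\<Omega>|lborel. conj_kernel N S e)"
proof -
  define q where "q e = indicator \<Omega> e * conj_kernel N S e" for e
  define m where "m e = indicator \<Omega> e * (partition_deriv d e / partition e * conj_kernel N S e)" for e
  define G where "G e = (d \<bullet> S) * q e - N * m e" for e
  have "integrable lborel q" "integrable lborel m"
    using kernel_integrable mean_integrable unfolding q_def[abs_def] m_def[abs_def] set_integrable_def by simp_all
  hence "integrable lborel G" unfolding G_def[abs_def] by auto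
  have "(\<integral>e. G e \<partial>lborel) = 0"
  proof (rule lborel_integral_directional_derivative_eq_0[OF convex_nat_param_space])
    show "q y = 0 \<and> G y = 0 \<and> (q \<longlongrightarrow> 0) (at y)" if "y \<notin> \<Omega>" for y
      using conj_kernel_tendsto_0[OF that \<open>0 < N\<close>] that
      by (simp add: q_def[abs_def] G_def m_def)
    show "((\<lambda>t. q (y + t *\<^sub>R d)) has_real_derivative G y) (at 0)" if "y \<in> \<Omega>" for y
    proof (rule has_field_derivative_transform_within_open)
      show "((\<lambda>t. conj_kernel N S (y + t *\<^sub>R d)) has_real_derivative G y) (at 0)"
        using conj_kernel_has_directional_derivative[OF that, of N S d] that
        by (simp add: G_def q_def m_def algebra_simps)
      show "open ((\<lambda>t::real. y + t *\<^sub>R d) -` \<Omega>)"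
        by (rule continuous_open_vimage[OF open_nat_param_space]) (intro continuous_intros)
    qed (use that in \<open>auto simp: q_def\<close>)
  qed fact+
  moreover have "(\<integral>e. G e \<partial>lborel) = (d \<bullet> S) * (\<integral>e. q e \<partial>lborel) - N * (\<integral>e. m e \<partial>lborel)"
    using \<open>integrable lborel q\<close> \<open>integrable lborel m\<close> unfolding G_def[abs_def] by simp
  ultimately show ?thesis
    using \<open>0 < N\<close> unfolding q_def[abs_def] m_def[abs_def] set_lebesgue_integral_def
    by (simp add: field_simps)
qed

text \<open>Only differences of cross entropies are computed: \<open>- ln h\<close> need not be integrable
  under \<open>P(\<cdot> | e)\<close>, but it cancels.\<close>
lemma cross_entropy_diff:
  assumes "e \<in> \<Omega>" "e1 \<in> \<Omega>" "e2 \<in> \<Omega>"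
    and integrable1: "integrable (expfam_dist M h T e) (\<lambda>z. - ln (expfam_pdf M h T e1 z))"
    and integrable2: "integrable (expfam_dist M h T e) (\<lambda>z. - ln (expfam_pdf M h T e2 z))"
  shows "cross_entropy e e1 - cross_entropy e e2
       = ln (partition e1) - ln (partition e2) - partition_deriv (e1 - e2) e / partition e"
proof -
  define p where "p = expfam_pdf M h T e"
  define l1 where "l1 z = - ln (expfam_pdf M h T e1 z)" for z
  define l2 where "l2 z = - ln (expfam_pdf M h T e2 z)" for z
  define c where "c = ln (partition e1) - ln (partition e2)"
  have [measurable]: "p \<in> borel_measurable M" "l1 \<in> borel_measurable M" "l2 \<in> borel_measurable M"
    unfolding p_def l1_def[abs_def] l2_def[abs_def] expfam_pdf_eq by measurable
  have p_nonneg: "AE z in M. 0 \<le> p z"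
    using h_nonneg partition_pos[OF \<open>e \<in> \<Omega>\<close>] by (intro AE_I2) (simp add: p_def expfam_pdf_eq)
  have dist: "expfam_dist M h T e = density M p" by (simp add: expfam_dist_def p_def)
  have "integrable M (\<lambda>z. p z * l1 z)" "integrable M (\<lambda>z. p z * l2 z)"
    using integrable1 integrable2 p_nonneg
    by (simp_all add: dist l1_def[symmetric] l2_def[symmetric] integrable_density)
  hence "(\<integral>z. l1 z \<partial>density M p) - (\<integral>z. l2 z \<partial>density M p) = (\<integral>z. p z * l1 z - p z * l2 z \<partial>M)"
    using p_nonneg by (simp add: integral_density)
  also have "\<dots> = (\<integral>z. (c * (h z * exp (e \<bullet> T z)) - h z * ((e1 - e2) \<bullet> T z) * exp (e \<bullet> T z)) / partition e \<partial>M)"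
  proof (rule Bochner_Integration.integral_cong[OF refl])
    fix z assume "z \<in> space M"
    show "p z * l1 z - p z * l2 z
        = (c * (h z * exp (e \<bullet> T z)) - h z * ((e1 - e2) \<bullet> T z) * exp (e \<bullet> T z)) / partition e"
    proof (cases "h z = 0")
      case False
      hence "0 < h z" using h_nonneg[OF \<open>z \<in> space M\<close>] by simp
      hence "l1 z - l2 z = c - (e1 - e2) \<bullet> T z"
        using partition_pos assms(2,3)
        by (simp add: l1_def l2_def c_def neg_ln_expfam_pdf inner_diff_left)
      hence "p z * l1 z - p z * l2 z = h z * exp (e \<bullet> T z) / partition e * (c - (e1 - e2) \<bullet> T z)"
        unfolding right_diff_distrib[symmetric] by (simp add: p_def expfam_pdf_eq)
      thus ?thesis by (simp add: field_simps)
    qed (simp add: p_def expfam_pdf_eq)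
  qed
  also have "\<dots> = (c * partition e - partition_deriv (e1 - e2) e) / partition e"
    using integrable_partition_deriv[OF \<open>e \<in> \<Omega>\<close>] \<open>e \<in> \<Omega>\<close>
    by (simp add: partition_def partition_deriv_def nat_param_space_def)
  finally show ?thesis
    using partition_pos[OF \<open>e \<in> \<Omega>\<close>]
    by (simp add: cross_entropy_def dist l1_def l2_def c_def field_simps)
qed

lemma expfam_g_powr:
  assumes "e \<in> \<Omega>"
  shows "expfam_g M h T e powr a = exp (- (a * ln (partition e)))"
  using partition_pos[OF assms]
  by (simp add: expfam_g_def partition_def[symmetric] powr_def ln_div)

lemma likelihood_mult_conj_prior:
  assumes "e \<in> \<Omega>"
  shows "(\<Prod>i<n. expfam_pdf M h T e (Z i)) * (expfam_g M h T e powr n0 * exp (e \<bullet> \<tau>0) / Z0)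
       = (\<Prod>i<n. h (Z i)) / Z0 * conj_kernel (real n + n0) (\<tau>0 + (\<Sum>i<n. T (Z i))) e"
proof -
  have "expfam_pdf M h T e z = h z * exp (e \<bullet> T z - ln (partition e))" for z
    using partition_pos[OF assms] by (simp add: expfam_pdf_eq exp_diff)
  hence "(\<Prod>i<n. expfam_pdf M h T e (Z i))
      = (\<Prod>i<n. h (Z i)) * exp (e \<bullet> (\<Sum>i<n. T (Z i)) - real n * ln (partition e))"
    by (simp add: prod.distrib exp_sum[symmetric] sum_subtractf inner_sum_right)
  thus ?thesis
    by (simp add: expfam_g_powr[OF assms] conj_kernel_def inner_add_right algebra_simps
        flip: exp_add)
qed

lemma regularized_emp_loss_eq:
  assumes "e \<in> \<Omega>" "0 < Z0" "\<forall>i<n. 0 < h (Z i)"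
  shows "(\<Sum>i<n. - ln (expfam_pdf M h T e (Z i))) / real n
           + - (1 / real n) * ln (expfam_g M h T e powr n0 * exp (e \<bullet> \<tau>0) / Z0)
       = (ln Z0 - (\<Sum>i<n. ln (h (Z i)))) / real n
           + 1 / real n * ((real n + n0) * ln (partition e) - e \<bullet> (\<tau>0 + (\<Sum>i<n. T (Z i))))"
proof -
  have "(\<Sum>i<n. - ln (expfam_pdf M h T e (Z i)))
      = (\<Sum>i<n. ln (partition e) - e \<bullet> T (Z i) - ln (h (Z i)))"
    using assms(3) partition_pos[OF assms(1)] by (intro sum.cong) (simp_all add: neg_ln_expfam_pdf)
  moreover have "ln (expfam_g M h T e powr n0 * exp (e \<bullet> \<tau>0) / Z0) = e \<bullet> \<tau>0 - n0 * ln (partition e) - ln Z0"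
    using assms(2) by (simp add: expfam_g_powr[OF assms(1)] ln_div ln_mult)
  ultimately have "(\<Sum>i<n. - ln (expfam_pdf M h T e (Z i)))
        - ln (expfam_g M h T e powr n0 * exp (e \<bullet> \<tau>0) / Z0)
      = ln Z0 - (\<Sum>i<n. ln (h (Z i)))
        + ((real n + n0) * ln (partition e) - e \<bullet> (\<tau>0 + (\<Sum>i<n. T (Z i))))"
    by (simp add: sum.distrib sum_subtractf inner_sum_right inner_add_right algebra_simps)
  hence "((\<Sum>i<n. - ln (expfam_pdf M h T e (Z i)))
        - ln (expfam_g M h T e powr n0 * exp (e \<bullet> \<tau>0) / Z0)) / real n
      = (ln Z0 - (\<Sum>i<n. ln (h (Z i)))
        + ((real n + n0) * ln (partition e) - e \<bullet> (\<tau>0 + (\<Sum>i<n. T (Z i))))) / real n"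
    by simp
  thus ?thesis by (simp add: diff_divide_distrib add_divide_distrib)
qed

end

locale conj_posterior = regular_exp_family +
  fixes lik p0 and K N :: real and S
  assumes K_pos: "0 < K" and N_pos: "0 < N"
    and posterior_eq: "\<And>e. e \<in> \<Omega> \<Longrightarrow> lik e * p0 e = K * conj_kernel N S e"
    and posterior_integrable: "set_integrable lborel \<Omega> (\<lambda>e. lik e * p0 e)"
begin

lemma set_integrable_conj_kernel: "set_integrable lborel \<Omega> (conj_kernel N S)"
proof -
  have "set_integrable lborel \<Omega> (\<lambda>e. K * conj_kernel N S e)"
    using posterior_integrable
    by (rule set_integrable_cong[OF refl refl, THEN iffD1, rotated]) (simp add: posterior_eq)
  thus ?thesis using K_pos by simp
qed

lemma set_integral_posterior: "(LINT e:\<Omega>|lborel. lik e * p0 e) = K * (LINT e:\<Omega>|lborel. conj_kernel N S e)"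
proof -
  have "(LINT e:\<Omega>|lborel. lik e * p0 e) = (LINT e:\<Omega>|lborel. K * conj_kernel N S e)"
    using open_nat_param_space posterior_eq by (intro set_lebesgue_integral_cong) auto
  thus ?thesis by simp
qed

lemma set_integral_posterior_pos:
  assumes "\<Omega> \<noteq> {}"
  shows "0 < (LINT e:\<Omega>|lborel. lik e * p0 e)"
  using open_nat_param_space assms posterior_integrable
  by (rule set_integral_pos_if_open) (simp add: posterior_eq K_pos conj_kernel_def)

lemma set_integral_cross_entropy_diff:
  assumes "e1 \<in> \<Omega>" "e2 \<in> \<Omega>"
    and loss1: "\<And>e. e \<in> \<Omega> \<Longrightarrow> integrable (expfam_dist M h T e) (\<lambda>z. - ln (expfam_pdf M h T e1 z))"
    and loss2: "\<And>e. e \<in> \<Omega> \<Longrightarrow> integrable (expfam_dist M h T e) (\<lambda>z. - ln (expfam_pdf M h T e2 z))"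
    and risk1: "set_integrable lborel \<Omega> (\<lambda>e. cross_entropy e e1 * lik e * p0 e)"
    and risk2: "set_integrable lborel \<Omega> (\<lambda>e. cross_entropy e e2 * lik e * p0 e)"
  shows "(LINT e:\<Omega>|lborel. cross_entropy e e1 * lik e * p0 e)
       - (LINT e:\<Omega>|lborel. cross_entropy e e2 * lik e * p0 e)
       = (ln (partition e1) - ln (partition e2) - (e1 - e2) \<bullet> S / N) * (LINT e:\<Omega>|lborel. lik e * p0 e)"
proof -
  define c where "c = ln (partition e1) - ln (partition e2)"
  define mean where "mean e = partition_deriv (e1 - e2) e / partition e * conj_kernel N S e" for e
  have pointwise: "cross_entropy e e1 * lik e * p0 e - cross_entropy e e2 * lik e * p0 e
      = c * (lik e * p0 e) - K * mean e" if "e \<in> \<Omega>" for e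
  proof -
    have "cross_entropy e e1 * lik e * p0 e - cross_entropy e e2 * lik e * p0 e
        = (cross_entropy e e1 - cross_entropy e e2) * (K * conj_kernel N S e)"
      by (simp add: posterior_eq[OF that, symmetric] algebra_simps)
    thus ?thesis
      by (simp add: cross_entropy_diff[OF that assms(1,2) loss1[OF that] loss2[OF that]]
          posterior_eq[OF that] mean_def c_def algebra_simps)
  qed
  have "set_integrable lborel \<Omega> (\<lambda>e. c * (lik e * p0 e)
      - (cross_entropy e e1 * lik e * p0 e - cross_entropy e e2 * lik e * p0 e))"
    using posterior_integrable risk1 risk2 by auto
  hence "set_integrable lborel \<Omega> (\<lambda>e. K * mean e)"
    by (rule set_integrable_cong[OF refl refl, THEN iffD1, rotated]) (simp add: pointwise)
  hence mean_integrable: "set_integrable lborel \<Omega> mean" using K_pos by simp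
  have mean_integral:
    "(LINT e:\<Omega>|lborel. mean e) = ((e1 - e2) \<bullet> S / N) * (LINT e:\<Omega>|lborel. conj_kernel N S e)"
    unfolding mean_def
    by (rule set_integral_partition_deriv_conj_kernel[OF N_pos set_integrable_conj_kernel
          mean_integrable[unfolded mean_def[abs_def]]])
  have "(LINT e:\<Omega>|lborel. cross_entropy e e1 * lik e * p0 e)
      - (LINT e:\<Omega>|lborel. cross_entropy e e2 * lik e * p0 e)
      = (LINT e:\<Omega>|lborel. c * (lik e * p0 e) - K * mean e)"
    using risk1 risk2 open_nat_param_space pointwise
    by (simp flip: set_integral_diff(2)) (intro set_lebesgue_integral_cong; simp)
  also have "\<dots> = c * (LINT e:\<Omega>|lborel. lik e * p0 e) - K * (LINT e:\<Omega>|lborel. mean e)"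
    using posterior_integrable mean_integrable by simp
  also have "\<dots> = (c - (e1 - e2) \<bullet> S / N) * (LINT e:\<Omega>|lborel. lik e * p0 e)"
    by (simp add: mean_integral set_integral_posterior algebra_simps)
  finally show ?thesis by (simp add: c_def)
qed

lemma posterior_expected_cross_entropy_diff:
  assumes "e1 \<in> \<Omega>" "e2 \<in> \<Omega>"
    and "\<And>e. e \<in> \<Omega> \<Longrightarrow> integrable (expfam_dist M h T e) (\<lambda>z. - ln (expfam_pdf M h T e1 z))"
    and "\<And>e. e \<in> \<Omega> \<Longrightarrow> integrable (expfam_dist M h T e) (\<lambda>z. - ln (expfam_pdf M h T e2 z))"
    and "set_integrable lborel \<Omega> (\<lambda>e. cross_entropy e e1 * lik e * p0 e)"
    and "set_integrable lborel \<Omega> (\<lambda>e. cross_entropy e e2 * lik e * p0 e)"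
  shows "posterior_expectation \<Omega> p0 lik (\<lambda>e. cross_entropy e e1)
       - posterior_expectation \<Omega> p0 lik (\<lambda>e. cross_entropy e e2)
       = 1 / N * (N * ln (partition e1) - e1 \<bullet> S - (N * ln (partition e2) - e2 \<bullet> S))"
proof -
  have "0 < (LINT e:\<Omega>|lborel. lik e * p0 e)"
    using assms(1) by (intro set_integral_posterior_pos) auto
  thus ?thesis
    using set_integral_cross_entropy_diff[OF assms] N_pos
    by (simp add: posterior_expectation_def diff_divide_distrib[symmetric] inner_diff_left
        field_simps)
qed

end

lemma perfect_reg_if_affine_in_potential:
  fixes Lhat R B V :: "'p \<Rightarrow> real"
  assumes "0 < a" "0 < b"
    and regularized: "\<And>\<theta>. \<theta> \<in> \<Theta> \<Longrightarrow> Lhat \<theta> + R \<theta> = c + a * V \<theta>"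
    and increments: "\<And>\<theta> \<theta>'. \<theta> \<in> \<Theta> \<Longrightarrow> \<theta>' \<in> \<Theta> \<Longrightarrow> B \<theta> - B \<theta>' = b * (V \<theta> - V \<theta>')"
  shows "perfect_reg \<Theta> Lhat R B"
proof -
  define \<theta>0 where "\<theta>0 = (SOME \<theta>. \<theta> \<in> \<Theta>)"
  define f where "f x = c + a * (V \<theta>0 + (x - B \<theta>0) / b)" for x
  have "strict_mono f"
    using assms(1,2) by (auto simp: strict_mono_def f_def divide_strict_right_mono)
  moreover have eq: "Lhat \<theta> + R \<theta> = f (B \<theta>)" if "\<theta> \<in> \<Theta>" for \<theta>
    using regularized[OF that] increments[OF that someI[of "\<lambda>\<theta>. \<theta> \<in> \<Theta>", OF that]] \<open>0 < b\<close>
    by (simp add: f_def \<theta>0_def)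
  ultimately have "bayes_optimal_reg \<Theta> Lhat R B"
    unfolding bayes_optimal_reg_def argmin_on_def by (auto simp: strict_mono_less_eq)
  thus ?thesis
    unfolding perfect_reg_def using \<open>strict_mono f\<close> eq by (blast intro: strict_mono_mono)
qed

theorem theorem2:
  fixes M :: "'z measure"
    and h :: "'z \<Rightarrow> real"
    and T :: "'z \<Rightarrow> 'k::euclidean_space"
    and \<eta> :: "'p \<Rightarrow> 'k"
    and \<Theta> :: "'p set"
    and n0 :: real and \<tau>0 :: 'k and Z0 :: real
    and n :: nat and Z :: "nat \<Rightarrow> 'z"
  defines "Om \<equiv> nat_param_space M h T"
    and "p0 \<equiv> (\<lambda>e. (expfam_g M h T e) powr n0 * exp (e \<bullet> \<tau>0) / Z0)"
    and "loss \<equiv> (\<lambda>z \<theta>. - ln (expfam_pdf M h T (\<eta> \<theta>) z))"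
    and "lik \<equiv> (\<lambda>e. \<Prod>i<n. expfam_pdf M h T e (Z i))"
  assumes h_meas: "h \<in> borel_measurable M"
    and h_nonneg: "\<forall>z\<in>space M. 0 \<le> h z"
    and T_meas: "T \<in> borel_measurable M"
    and Om_open: "open Om"
    and Om_norm: "\<forall>e\<in>Om. 0 < (\<integral>z. h z * exp (e \<bullet> T z) \<partial>M)"
    and \<eta>_Om: "\<eta> ` \<Theta> \<subseteq> Om"
    and n0_pos: "0 < n0"
    and Z0_int: "set_integrable lborel Om (\<lambda>e. (expfam_g M h T e) powr n0 * exp (e \<bullet> \<tau>0))"
    and Z0_def: "Z0 = (LINT e:Om|lborel. (expfam_g M h T e) powr n0 * exp (e \<bullet> \<tau>0))"
    and Z0_pos: "0 < Z0"
    and n_pos: "1 \<le> n"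
    and Z_supp: "\<forall>i<n. Z i \<in> space M \<and> 0 < h (Z i)"
    and post_int: "set_integrable lborel Om (\<lambda>e. lik e * p0 e)"
    and loss_int: "\<forall>\<theta>\<in>\<Theta>. \<forall>e\<in>Om. integrable (expfam_dist M h T e) (\<lambda>z. loss z \<theta>)"
    and Lbar_int: "\<forall>\<theta>\<in>\<Theta>. set_integrable lborel Om
                     (\<lambda>e. pop_loss loss (expfam_dist M h T e) \<theta> * lik e * p0 e)"
  shows "bayes_optimal_reg \<Theta> (emp_loss loss n Z) (\<lambda>\<theta>. - (1 / real n) * ln (p0 (\<eta> \<theta>)))
           (\<lambda>\<theta>. posterior_expectation Om p0 lik (\<lambda>e. pop_loss loss (expfam_dist M h T e) \<theta>))
       \<and> perfect_reg \<Theta> (emp_loss loss n Z) (\<lambda>\<theta>. - (1 / real n) * ln (p0 (\<eta> \<theta>)))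
           (\<lambda>\<theta>. posterior_expectation Om p0 lik (\<lambda>e. pop_loss loss (expfam_dist M h T e) \<theta>))"
proof -
  define N where "N = real n + n0"
  define S where "S = \<tau>0 + (\<Sum>i<n. T (Z i))"
  interpret exp_family M h T
    using h_meas h_nonneg T_meas by unfold_locales auto
  interpret regular_exp_family M h T
    using Om_open Om_norm by unfold_locales (auto simp: Om_def partition_def)
  interpret conj_posterior M h T lik p0 "(\<Prod>i<n. h (Z i)) / Z0" N S
  proof
    show "0 < (\<Prod>i<n. h (Z i)) / Z0" using Z_supp Z0_pos by (auto intro!: divide_pos_pos prod_pos)
    show "0 < N" using n0_pos by (simp add: N_def add_nonneg_pos)
  qed (use likelihood_mult_conj_prior post_int in \<open>simp_all add: lik_def p0_def N_def S_def Om_def\<close>)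
  define V where "V \<theta> = N * ln (partition (\<eta> \<theta>)) - \<eta> \<theta> \<bullet> S" for \<theta>
  have regularized_loss: "emp_loss loss n Z \<theta> + - (1 / real n) * ln (p0 (\<eta> \<theta>))
      = (ln Z0 - (\<Sum>i<n. ln (h (Z i)))) / real n + 1 / real n * V \<theta>" if "\<theta> \<in> \<Theta>" for \<theta>
    unfolding emp_loss_def loss_def p0_def V_def N_def S_def
    using \<eta>_Om that Z0_pos Z_supp by (intro regularized_emp_loss_eq) (auto simp: Om_def)
  have risk_diff: "posterior_expectation Om p0 lik (\<lambda>e. pop_loss loss (expfam_dist M h T e) \<theta>)
      - posterior_expectation Om p0 lik (\<lambda>e. pop_loss loss (expfam_dist M h T e) \<theta>')
      = 1 / N * (V \<theta> - V \<theta>')" if "\<theta> \<in> \<Theta>" "\<theta>' \<in> \<Theta>" for \<theta> \<theta>'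
    using posterior_expected_cross_entropy_diff[of "\<eta> \<theta>" "\<eta> \<theta>'"] loss_int Lbar_int \<eta>_Om that
    by (simp add: V_def Om_def pop_loss_def loss_def cross_entropy_def image_subset_iff)
  have "perfect_reg \<Theta> (emp_loss loss n Z) (\<lambda>\<theta>. - (1 / real n) * ln (p0 (\<eta> \<theta>)))
      (\<lambda>\<theta>. posterior_expectation Om p0 lik (\<lambda>e. pop_loss loss (expfam_dist M h T e) \<theta>))"
    by (rule perfect_reg_if_affine_in_potential[OF _ _ regularized_loss risk_diff])
       (use N_pos n_pos in auto)
  thus ?thesis by (simp add: perfect_reg_def)
qed

end
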